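(* Let $\xi>0$ and let $g:\mathbb R\to\mathbb R$ be real-analytic with $g(x+2\pi)=e^{-2\pi\xi}g(x)$ for all $x$, and let $(c_k)_{k\in\mathbb Z}$ be the Fourier coefficients of the $2\pi$-periodic function $\theta\mapsto e^{\xi\theta}g(\theta)$. Let $\tilde\rho_{g,-\xi}=\sum_{k\in\mathbb Z}c_k\rho_{-\xi,k}$. If $\tilde\rho_{g,-\xi}(x)>0$ for all $x>0$, then $\sum_{k\in\mathbb Z}\frac{c_k}{\xi-ik}\le0$.
   Context: $\rho_1(z)=z\int_0^z e^{-s^2}ds$ is entire and even, so there is an entire $\rho_2$ with $\rho_1(z)=\rho_2(z^2)$. For $\eta\in\mathbb R$, $k\in\mathbb Z$, $\rho_{\eta,k}(z)=\frac2\pi\big(2e^{(\eta+ik)z}\rho_2((\eta+ik)z)+1\big)$. The Fourier coefficients $c_k=\frac1{2\pi}\int_0^{2\pi}e^{\xi\theta}g(\theta)e^{-ik\theta}d\theta$ decay exponentially, so the series defining $\tilde\rho_{g,-\xi}$ converges locally uniformly on a strip around $\mathbb R$ to a real-analytic function on $\mathbb R$. *)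

theory Defs
  imports "HOL-Complex_Analysis.Complex_Analysis" "HOL-Library.Complex_Order"
begin

definition rho1 :: "complex \<Rightarrow> complex" where
  "rho1 z = z * contour_integral (linepath 0 z) (\<lambda>s. exp (- (s\<^sup>2)))"

text \<open>rho2 is the entire function with rho1 z = rho2 (z^2); since rho1 is even,
  rho2 w = rho1 (sqrt w) for any choice of square root.\<close>
definition rho2 :: "complex \<Rightarrow> complex" where
  "rho2 w = rho1 (csqrt w)"

definition rho_ek :: "real \<Rightarrow> int \<Rightarrow> complex \<Rightarrow> complex" where
  "rho_ek \<eta> k z = (2 / pi) * (2 * exp ((of_real \<eta> + \<i> * of_int k) * z)
        * rho2 ((of_real \<eta> + \<i> * of_int k) * z) + 1)"

definition real_analytic :: "(real \<Rightarrow> real) \<Rightarrow> bool" where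
  "real_analytic g \<longleftrightarrow> (\<forall>x. \<exists>r>0. \<exists>a::nat \<Rightarrow> real.
      \<forall>y. \<bar>y - x\<bar> < r \<longrightarrow> (\<lambda>n. a n * (y - x) ^ n) sums g y)"

definition fourier_coeff :: "real \<Rightarrow> (real \<Rightarrow> real) \<Rightarrow> int \<Rightarrow> complex" where
  "fourier_coeff \<xi> g k = (1 / (2 * pi)) *
     integral {0..2*pi} (\<lambda>\<theta>. of_real (exp (\<xi> * \<theta>) * g \<theta>) * exp (- \<i> * of_int k * of_real \<theta>))"

definition rho_tilde :: "real \<Rightarrow> (real \<Rightarrow> real) \<Rightarrow> real \<Rightarrow> complex" where
  "rho_tilde \<xi> g x = (\<Sum>\<^sub>\<infinity>k::int. fourier_coeff \<xi> g k * rho_ek (- \<xi>) k (of_real x))"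

end

theory Submission
  imports Defs
begin

text \<open>Four integrations by parts, whose boundary terms cancel by quasi-periodicity, give
  \<open>c\<^sub>k = O(|\<xi> - i k|\<^sup>-\<^sup>4)\<close>. Writing \<open>exp u * rho2 u = u \<integral>\<^sub>0\<^sup>1 exp (u (1 - t\<^sup>2)) dt\<close> and
  comparing the exponent with its linearisation \<open>2 u (1 - t)\<close> at \<open>t = 1\<close> shows
  \<open>x rho_ek (-\<xi>) k x = -1 / (\<pi> (\<xi> - i k)) + O(|\<xi> - i k|\<^sup>2 / x)\<close> uniformly in \<open>k\<close>. Hence
  \<open>\<pi> x rho_tilde \<xi> g x + \<Sum>\<^sub>k c\<^sub>k / (\<xi> - i k) = O(1 / x)\<close>; as \<open>\<pi> x rho_tilde \<xi> g x\<close> is a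
  positive real for \<open>x > 0\<close>, the sum is a limit of negative reals.\<close>

section \<open>Real-analytic functions\<close>

lemma real_analytic_power_series_deriv:
  assumes "real_analytic g"
  obtains r D b where "r > 0"
    and "\<And>y. \<bar>y - x\<bar> < r \<Longrightarrow> (g has_real_derivative D y) (at y)"
    and "\<And>y. \<bar>y - x\<bar> < r \<Longrightarrow> (\<lambda>n. b n * (y - x) ^ n) sums D y"
proof -
  obtain r a where r: "r > 0" and sa: "\<And>y. \<bar>y - x\<bar> < r \<Longrightarrow> (\<lambda>n. a n * (y - x) ^ n) sums g y"
    using assms unfolding real_analytic_def by blast
  define h where "h z = (\<Sum>n. a n * z ^ n)" for z :: real
  define D where "D z = (\<Sum>n. diffs a n * z ^ n)" for z :: real
  have sm: "summable (\<lambda>n. a n * z ^ n)" if "norm z < r" for z :: real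
    using sa[of "x + z"] that by (auto simp: sums_iff)
  have hD: "(h has_real_derivative D z) (at z)" if "norm z < r" for z :: real
    unfolding h_def D_def by (rule termdiffs_strong'[of r]) (use sm that in auto)
  have gh: "g y = h (y - x)" if "\<bar>y - x\<bar> < r" for y
    using sa[OF that] unfolding h_def by (simp add: sums_iff)
  have "(g has_real_derivative D (y - x)) (at y)" if "\<bar>y - x\<bar> < r" for y
  proof -
    have "((\<lambda>y. h (y - x)) has_real_derivative D (y - x) * 1) (at y)"
      by (rule DERIV_chain2[OF hD]) (use that in \<open>auto intro!: derivative_eq_intros\<close>)
    then have "((\<lambda>y. h (y - x)) has_real_derivative D (y - x)) (at y)" by simp
    then show ?thesis
      by (rule has_field_derivative_transform_within_open[where S = "ball x r"])
         (use that gh in \<open>auto simp: dist_real_def abs_minus_commute\<close>)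
  qed
  moreover have "(\<lambda>n. diffs a n * (y - x) ^ n) sums D (y - x)" if "\<bar>y - x\<bar> < r" for y
    unfolding D_def by (rule summable_sums, rule termdiff_converges[of _ r]) (use sm that in auto)
  ultimately show ?thesis
    using that[of r "\<lambda>y. D (y - x)" "diffs a"] r by blast
qed

lemma real_analytic_has_deriv:
  assumes "real_analytic g"
  shows "(g has_real_derivative deriv g x) (at x)"
proof -
  obtain r D where "r > 0" and "\<And>y. \<bar>y - x\<bar> < r \<Longrightarrow> (g has_real_derivative D y) (at y)"
    using real_analytic_power_series_deriv[OF assms] by blast
  then show ?thesis by (metis DERIV_imp_deriv abs_zero diff_self)
qed

lemma real_analytic_deriv:
  assumes "real_analytic g"
  shows "real_analytic (deriv g)"
  unfolding real_analytic_def
proof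
  fix x
  obtain r D b where r: "r > 0" and D: "\<And>y. \<bar>y - x\<bar> < r \<Longrightarrow> (g has_real_derivative D y) (at y)"
    and b: "\<And>y. \<bar>y - x\<bar> < r \<Longrightarrow> (\<lambda>n. b n * (y - x) ^ n) sums D y"
    using real_analytic_power_series_deriv[OF assms] by blast
  have "\<forall>y. \<bar>y - x\<bar> < r \<longrightarrow> (\<lambda>n. b n * (y - x) ^ n) sums deriv g y"
    using D b DERIV_imp_deriv by metis
  then show "\<exists>r>0. \<exists>a. \<forall>y. \<bar>y - x\<bar> < r \<longrightarrow> (\<lambda>n. a n * (y - x) ^ n) sums deriv g y"
    using r by blast
qed

lemma real_analytic_higher_deriv: "real_analytic g \<Longrightarrow> real_analytic ((deriv ^^ n) g)"
  by (induction n) (auto intro: real_analytic_deriv)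

lemma real_analytic_continuous_on: "real_analytic g \<Longrightarrow> continuous_on S g"
  by (meson DERIV_isCont continuous_at_imp_continuous_on real_analytic_has_deriv)

lemma deriv_quasi_periodic:
  assumes "real_analytic g" and "\<And>x. g (x + p) = q * g x"
  shows "deriv g (x + p) = q * deriv g x"
proof -
  have "((\<lambda>x. g (x + p)) has_real_derivative deriv g (x + p) * 1) (at x)"
    by (rule DERIV_chain2[OF real_analytic_has_deriv[OF assms(1)]]) (auto intro!: derivative_eq_intros)
  moreover have "((\<lambda>x. g (x + p)) has_real_derivative q * deriv g x) (at x)"
    unfolding assms(2) by (auto intro!: derivative_eq_intros real_analytic_has_deriv[OF assms(1)])
  ultimately show ?thesis using DERIV_unique by fastforce
qed

section \<open>Decay of the Fourier coefficients\<close>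

definition period_laplace :: "(real \<Rightarrow> real) \<Rightarrow> complex \<Rightarrow> complex" where
  "period_laplace p l = integral {0..2*pi} (\<lambda>\<theta>. of_real (p \<theta>) * exp (l * of_real \<theta>))"

lemma fourier_coeff_eq_period_laplace:
  "fourier_coeff \<xi> g k = period_laplace g (of_real \<xi> - \<i> * of_int k) / (2 * pi)"
proof -
  have "exp ((of_real \<xi> - \<i> * of_int k) * of_real \<theta>) =
        complex_of_real (exp (\<xi> * \<theta>)) * exp (- \<i> * of_int k * of_real \<theta>)" for \<theta>
  proof -
    have "(of_real \<xi> - \<i> * of_int k) * of_real \<theta> = complex_of_real (\<xi> * \<theta>) + (- \<i> * of_int k * of_real \<theta>)"
      by (simp add: algebra_simps)
    then show ?thesis by (simp only: exp_add exp_of_real)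
  qed
  then show ?thesis unfolding fourier_coeff_def period_laplace_def by (simp add: mult_ac)
qed

lemma period_laplace_deriv:
  assumes "real_analytic p"
    and "complex_of_real (p (2*pi)) * exp (l * of_real (2*pi)) = complex_of_real (p 0)"
  shows "l * period_laplace p l = - period_laplace (deriv p) l"
proof -
  define F where "F \<theta> = complex_of_real (p \<theta>) * exp (l * of_real \<theta>)" for \<theta>
  define F' where "F' \<theta> = l * F \<theta> + complex_of_real (deriv p \<theta>) * exp (l * of_real \<theta>)" for \<theta>
  have "(F' has_integral F (2*pi) - F 0) {0..2*pi}"
  proof (rule fundamental_theorem_of_calculus)
    fix x assume "x \<in> {0..2*pi}"
    have "((\<lambda>z. exp (l * z)) has_field_derivative l * exp (l * of_real x)) (at (of_real x))"
      by (auto intro!: derivative_eq_intros)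
    from has_vector_derivative_mult[OF has_vector_derivative_of_real[OF
          has_field_derivative_at_within[OF real_analytic_has_deriv[OF assms(1)]]]
          has_vector_derivative_real_field[OF this]]
    show "(F has_vector_derivative F' x) (at x within {0..2*pi})"
      unfolding F_def F'_def by (simp add: algebra_simps)
  qed simp
  moreover have "F (2*pi) - F 0 = 0" using assms(2) unfolding F_def by simp
  ultimately have "integral {0..2*pi} F' = 0" by (simp add: integral_unique)
  moreover have "integral {0..2*pi} F' = l * period_laplace p l + period_laplace (deriv p) l"
    unfolding F'_def F_def period_laplace_def
    by (subst integral_add) (auto intro!: integrable_continuous_interval continuous_intros
        real_analytic_continuous_on assms(1) real_analytic_deriv)
  ultimately show ?thesis by (simp add: eq_neg_iff_add_eq_0)
qed

text \<open>The condition \<open>q * exp (2 \<pi> l) = 1\<close> makes the boundary terms of every integration by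
  parts cancel.\<close>
lemma period_laplace_higher_deriv:
  assumes "real_analytic p" and "\<And>x. p (x + 2*pi) = q * p x"
    and "q * exp (l * of_real (2*pi)) = 1"
  shows "l ^ n * period_laplace p l = (-1) ^ n * period_laplace ((deriv ^^ n) p) l"
  using assms(1,2)
proof (induction n arbitrary: p)
  case 0
  then show ?case by simp
next
  case (Suc n)
  have "complex_of_real (p (2*pi)) * exp (l * of_real (2*pi)) = complex_of_real (p 0)"
    using Suc.prems(2)[of 0] assms(3) by (simp flip: mult.assoc)
  then have "l ^ Suc n * period_laplace p l = l ^ n * - period_laplace (deriv p) l"
    by (simp flip: period_laplace_deriv[OF Suc.prems(1)] add: mult_ac)
  also have "\<dots> = (-1) ^ Suc n * period_laplace ((deriv ^^ Suc n) p) l"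
  proof -
    have "real_analytic (deriv p)" using Suc.prems(1) by (rule real_analytic_deriv)
    moreover have "deriv p (x + 2*pi) = q * deriv p x" for x
      using Suc.prems by (rule deriv_quasi_periodic)
    ultimately show ?thesis
      using Suc.IH[of "deriv p"] by (simp add: funpow_Suc_right del: funpow.simps)
  qed
  finally show ?case .
qed

lemma norm_period_laplace_le:
  assumes "continuous_on {0..2*pi} p" and "\<And>\<theta>. \<theta> \<in> {0..2*pi} \<Longrightarrow> \<bar>p \<theta>\<bar> \<le> B"
    and "Re l \<ge> 0"
  shows "norm (period_laplace p l) \<le> 2 * pi * B * exp (2 * pi * Re l)"
proof -
  have "norm (period_laplace p l) \<le> (B * exp (2 * pi * Re l)) * (2 * pi - 0)"
    unfolding period_laplace_def
  proof (rule integral_bound)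
    fix t assume t: "t \<in> {0..2*pi}"
    have "t * Re l \<le> 2 * pi * Re l" using t assms(3) by (intro mult_right_mono) auto
    then have "norm (exp (l * complex_of_real t)) \<le> exp (2 * pi * Re l)"
      by (simp add: norm_exp_eq_Re mult.commute)
    then show "norm (complex_of_real (p t) * exp (l * complex_of_real t)) \<le> B * exp (2 * pi * Re l)"
      using assms(2)[OF t] unfolding norm_mult by (intro mult_mono) auto
  qed (use assms(1) in \<open>auto intro!: continuous_intros\<close>)
  then show ?thesis by (simp add: mult_ac)
qed

lemma fourier_coeff_decay:
  fixes \<xi> :: real and g :: "real \<Rightarrow> real"
  assumes "\<xi> > 0" and "real_analytic g"
    and "\<And>x. g (x + 2 * pi) = exp (- 2 * pi * \<xi>) * g x"
  obtains M where "M \<ge> 0"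
    and "\<And>k::int. norm (fourier_coeff \<xi> g k) \<le> M / norm (of_real \<xi> - \<i> * of_int k) ^ n"
proof -
  define h where "h = (deriv ^^ n) g"
  have h: "real_analytic h" unfolding h_def by (rule real_analytic_higher_deriv[OF assms(2)])
  obtain B where B: "\<And>\<theta>. \<theta> \<in> {0..2*pi} \<Longrightarrow> \<bar>h \<theta>\<bar> \<le> B"
    using compact_imp_bounded[OF compact_continuous_image[OF real_analytic_continuous_on[OF h] compact_Icc]]
    unfolding bounded_iff by (metis image_eqI real_norm_def)
  define M where "M = max 0 B * exp (2 * pi * \<xi>)"
  have "norm (fourier_coeff \<xi> g k) \<le> M / norm (of_real \<xi> - \<i> * of_int k) ^ n" for k :: int
  proof -
    define l where "l = of_real \<xi> - \<i> * of_int k"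
    have "l \<noteq> 0" using assms(1) unfolding l_def by (auto simp: complex_eq_iff)
    have "l * of_real (2*pi) = complex_of_real (2 * pi * \<xi>) + \<i> * (of_int (- k) * (of_real pi * 2))"
      unfolding l_def by (simp add: algebra_simps)
    then have "exp (l * of_real (2*pi)) = of_real (exp (2 * pi * \<xi>))"
      by (simp only: exp_add exp_of_real exp_2pi_1_int mult_1_right)
    then have "exp (- 2 * pi * \<xi>) * exp (l * of_real (2*pi)) = 1"
      by (simp flip: of_real_mult exp_add)
    from period_laplace_higher_deriv[OF assms(2) _ this, of n] assms(3)
    have "period_laplace g l = (-1) ^ n * period_laplace h l / l ^ n"
      using \<open>l \<noteq> 0\<close> unfolding h_def by (simp add: field_simps)
    moreover have "norm (period_laplace h l) \<le> 2 * pi * max 0 B * exp (2 * pi * Re l)"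
      by (rule norm_period_laplace_le[OF real_analytic_continuous_on[OF h]])
         (use B assms(1) in \<open>force simp: l_def\<close>)+
    ultimately have "norm (period_laplace g l) \<le> 2 * pi * M / norm l ^ n"
      unfolding M_def l_def by (simp add: norm_divide norm_mult norm_power divide_right_mono mult.assoc)
    then have "norm (period_laplace g l) / (2 * pi) \<le> (2 * pi * M / norm l ^ n) / (2 * pi)"
      by (rule divide_right_mono) simp
    then show ?thesis
      unfolding fourier_coeff_eq_period_laplace l_def by (simp add: norm_divide)
  qed
  then show ?thesis using that[of M] unfolding M_def by simp
qed

section \<open>Asymptotics of \<open>rho2\<close> in the left half-plane\<close>

lemma rho2_eq_integral: "rho2 u = u * integral {0..1} (\<lambda>t. exp (- (u * of_real t ^ 2)))"
proof -
  define z where "z = csqrt u"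
  have zz: "z ^ 2 = u" unfolding z_def by simp
  have "rho2 u = z * integral {0..1} (\<lambda>t. exp (- ((linepath 0 z t)\<^sup>2)) * z)"
    unfolding rho2_def rho1_def z_def contour_integral_integral by simp
  also have "(\<lambda>t. exp (- ((linepath 0 z t)\<^sup>2)) * z) = (\<lambda>t. exp (- (u * of_real t ^ 2)) * z)"
    by (rule ext) (simp add: linepath_def scaleR_conv_of_real power_mult_distrib zz[symmetric] mult.commute)
  finally show ?thesis by (simp add: zz[symmetric] power2_eq_square)
qed

lemma exp_mult_rho2_eq_integral:
  "exp u * rho2 u = u * integral {0..1} (\<lambda>t. exp (u * (1 - of_real t ^ 2)))"
proof -
  have "(\<lambda>t. exp (u * (1 - of_real t ^ 2))) = (\<lambda>t. exp u * exp (- (u * of_real t ^ 2)))"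
    by (rule ext) (simp add: exp_add[symmetric] algebra_simps)
  then show ?thesis by (simp add: rho2_eq_integral)
qed

lemma has_integral_mult_exp_quadratic:
  fixes u :: complex
  shows "((\<lambda>t. 2 * u * of_real t * exp (u * (1 - of_real t ^ 2))) has_integral (exp u - 1)) {0..1}"
proof -
  have "((\<lambda>t. 2 * u * of_real t * exp (u * (1 - of_real t ^ 2))) has_integral
        ((\<lambda>t. - exp (u * (1 - of_real t ^ 2))) 1 - (\<lambda>t. - exp (u * (1 - of_real t ^ 2))) 0)) {0..1}"
  proof (rule fundamental_theorem_of_calculus)
    fix x :: real
    have "((\<lambda>z. - exp (u * (1 - z ^ 2))) has_field_derivative
          2 * u * of_real x * exp (u * (1 - of_real x ^ 2))) (at (of_real x))"
      by (auto intro!: derivative_eq_intros simp: algebra_simps)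
    from has_vector_derivative_real_field[OF this]
    show "((\<lambda>t. - exp (u * (1 - of_real t ^ 2))) has_vector_derivative
          2 * u * of_real x * exp (u * (1 - of_real x ^ 2))) (at x within {0..1})" .
  qed simp
  then show ?thesis by simp
qed

lemma has_integral_mult_exp_linear:
  fixes u :: complex
  assumes "u \<noteq> 0"
  shows "((\<lambda>t. (1 - of_real t) * exp (2 * u * (1 - of_real t))) has_integral
           ((1 + exp (2 * u) * (2 * u - 1)) / (4 * u ^ 2))) {0..1}"
proof -
  define H where "H t = - exp (2 * u * (1 - t)) * (2 * u * (1 - t) - 1) / (4 * u ^ 2)" for t :: complex
  have "((\<lambda>t. (1 - of_real t) * exp (2 * u * (1 - of_real t))) has_integral
          (H (of_real 1) - H (of_real 0))) {0..1}"
  proof (rule fundamental_theorem_of_calculus)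
    fix x :: real
    have "(H has_field_derivative (1 - of_real x) * exp (2 * u * (1 - of_real x))) (at (of_real x))"
      unfolding H_def using assms
      by (auto intro!: derivative_eq_intros simp: field_simps power2_eq_square)
    from has_vector_derivative_real_field[OF this]
    show "((\<lambda>t. H (of_real t)) has_vector_derivative (1 - of_real x) * exp (2 * u * (1 - of_real x)))
          (at x within {0..1})" .
  qed simp
  moreover have "H (of_real 1) - H (of_real 0) = (1 + exp (2 * u) * (2 * u - 1)) / (4 * u ^ 2)"
    unfolding H_def using assms by (simp add: field_simps)
  ultimately show ?thesis by simp
qed

lemma integral_cube_exp_le:
  fixes a :: real
  assumes "a > 0"
  shows "integral {0..1} (\<lambda>t. (1 - t) ^ 3 * exp (- a * (1 - t))) \<le> 6 / a ^ 4"
proof -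
  define G where "G t = exp (- a * (1 - t)) *
      ((1 - t) ^ 3 / a + 3 * (1 - t) ^ 2 / a ^ 2 + 6 * (1 - t) / a ^ 3 + 6 / a ^ 4)" for t
  have "((\<lambda>t. (1 - t) ^ 3 * exp (- a * (1 - t))) has_integral (G 1 - G 0)) {0..1}"
  proof (rule fundamental_theorem_of_calculus)
    fix x :: real
    show "(G has_vector_derivative (1 - x) ^ 3 * exp (- a * (1 - x))) (at x within {0..1})"
      unfolding G_def has_real_derivative_iff_has_vector_derivative[symmetric] using assms
      by (auto intro!: derivative_eq_intros simp: field_simps eval_nat_numeral)
  qed simp
  moreover have "G 1 - G 0 \<le> 6 / a ^ 4"
    unfolding G_def using assms by simp
  ultimately show ?thesis by (simp add: integral_unique)
qed

lemma norm_exp_minus_one_le: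
  fixes z :: complex
  assumes "Re z \<ge> 0"
  shows "norm (exp z - 1) \<le> norm z * exp (Re z)"
proof -
  have "norm (exp z - exp 0) \<le> exp (Re z) * norm (z - 0)"
  proof (rule field_differentiable_bound[where S = "closed_segment 0 z" and f' = exp])
    fix w assume "w \<in> closed_segment 0 z"
    then obtain t where t: "0 \<le> t" "t \<le> 1" "w = t *\<^sub>R z"
      unfolding closed_segment_def by auto
    have "Re w \<le> Re z" using t assms by (simp add: mult_left_le_one_le)
    then show "norm (exp w) \<le> exp (Re z)" by (simp add: norm_exp_eq_Re)
  qed (auto intro!: derivative_eq_intros)
  then show ?thesis by (simp add: mult.commute)
qed

text \<open>With \<open>s = 1 - t\<close> one has \<open>1 - t\<^sup>2 = 2 s - s\<^sup>2\<close>, so the two exponentials differ by a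
  factor \<open>exp (- u s\<^sup>2)\<close> that is \<open>1 + O(|u| s\<^sup>2)\<close>.\<close>
lemma norm_exp_quadratic_sub_exp_linear_le:
  fixes u :: complex and t :: real
  assumes "Re u < 0" and "t \<in> {0..1}"
  shows "norm ((1 - of_real t) * (exp (u * (1 - of_real t ^ 2)) - exp (2 * u * (1 - of_real t))))
         \<le> norm u * ((1 - t) ^ 3 * exp (Re u * (1 - t)))"
proof -
  define s where "s = 1 - t"
  have s: "0 \<le> s" "s \<le> 1" using assms(2) unfolding s_def by auto
  have "exp (u * (1 - of_real t ^ 2)) = exp (2 * u * of_real s + (- (u * of_real s ^ 2)))"
    by (rule arg_cong[where f = exp]) (simp add: s_def algebra_simps power2_eq_square)
  then have "exp (u * (1 - of_real t ^ 2)) - exp (2 * u * (1 - of_real t)) =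
       exp (2 * u * of_real s) * (exp (- (u * of_real s ^ 2)) - 1)"
    unfolding exp_add by (simp add: s_def algebra_simps)
  moreover have "norm (1 - complex_of_real t) = s"
    using s unfolding s_def by (metis of_real_1 of_real_diff norm_of_real abs_of_nonneg)
  ultimately have eq: "norm ((1 - of_real t) * (exp (u * (1 - of_real t ^ 2)) - exp (2 * u * (1 - of_real t))))
       = s * (exp (2 * Re u * s) * norm (exp (- (u * of_real s ^ 2)) - 1))"
    by (simp add: norm_mult norm_exp_eq_Re)
  have "norm (exp (- (u * of_real s ^ 2)) - 1) \<le> norm u * s ^ 2 * exp (- Re u * s ^ 2)"
    using norm_exp_minus_one_le[of "- (u * of_real s ^ 2)"] assms(1)
    by (simp add: norm_mult norm_power power2_eq_square mult_nonpos_nonneg)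
  then have "s * (exp (2 * Re u * s) * norm (exp (- (u * of_real s ^ 2)) - 1))
      \<le> norm u * (s ^ 3 * exp (2 * Re u * s - Re u * s ^ 2))"
    using s by (auto intro!: mult_left_mono simp: exp_diff exp_minus field_simps power3_eq_cube power2_eq_square)
  also have "\<dots> \<le> norm u * (s ^ 3 * exp (Re u * s))"
  proof -
    have "s ^ 2 \<le> s" using s by (simp add: power2_eq_square mult_left_le_one_le)
    then have "- Re u * s ^ 2 \<le> - Re u * s" using assms(1) by (intro mult_left_mono) auto
    then show ?thesis using s by (intro mult_left_mono) (auto simp: mult.commute)
  qed
  finally show ?thesis unfolding eq s_def .
qed

text \<open>Split the integrand of \<open>exp u * rho2 u\<close> with the weights \<open>t\<close> and \<open>1 - t\<close>: the first part
  integrates exactly, and in the second part \<open>1 - t\<^sup>2\<close> is replaced by its linearisation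
  \<open>2 (1 - t)\<close> at \<open>t = 1\<close>, which also integrates exactly.\<close>
lemma exp_mult_rho2_expansion:
  fixes u :: complex
  assumes "u \<noteq> 0"
  shows "2 * exp u * rho2 u + 1 - 1 / (2 * u) = exp u + exp (2 * u) * (2 * u - 1) / (2 * u) +
     2 * u * integral {0..1} (\<lambda>t. (1 - of_real t) * (exp (u * (1 - of_real t ^ 2)) - exp (2 * u * (1 - of_real t))))"
    (is "_ = _ + _ + 2 * u * integral {0..1} ?Q")
proof -
  define e where "e t = exp (u * (1 - of_real t ^ 2))" for t :: real
  define P where "P t = (1 - of_real t) * exp (2 * u * (1 - of_real t))" for t :: real
  define q where "q = integral {0..1} ?Q"
  have "integral {0..1} e = integral {0..1} (\<lambda>t. of_real t * e t + P t + ?Q t)"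
    by (rule integral_cong) (simp add: e_def P_def algebra_simps)
  also have "\<dots> = integral {0..1} (\<lambda>t. of_real t * e t) + integral {0..1} P + integral {0..1} ?Q"
    unfolding e_def P_def
    by (subst integral_add integral_add; auto intro!: integrable_continuous_interval continuous_intros)+
  also have "integral {0..1} (\<lambda>t. of_real t * e t) = (exp u - 1) / (2 * u)"
  proof -
    have "2 * u * integral {0..1} (\<lambda>t. of_real t * e t) = exp u - 1"
      using integral_unique[OF has_integral_mult_exp_quadratic[of u]]
      unfolding e_def by (simp add: mult.assoc)
    then show ?thesis using assms by (simp add: field_simps)
  qed
  also have "integral {0..1} P = (1 + exp (2 * u) * (2 * u - 1)) / (4 * u ^ 2)"
    unfolding P_def by (rule integral_unique[OF has_integral_mult_exp_linear[OF assms]])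
  finally have "integral {0..1} e = (exp u - 1) / (2 * u) +
      (1 + exp (2 * u) * (2 * u - 1)) / (4 * u ^ 2) + q" unfolding q_def .
  moreover have "exp u * rho2 u = u * integral {0..1} e"
    unfolding e_def by (rule exp_mult_rho2_eq_integral)
  ultimately have "2 * exp u * rho2 u + 1 - 1 / (2 * u) = 2 * u * ((exp u - 1) / (2 * u) +
      (1 + exp (2 * u) * (2 * u - 1)) / (4 * u ^ 2) + q) + 1 - 1 / (2 * u)" by simp
  also have "\<dots> = exp u + exp (2 * u) * (2 * u - 1) / (2 * u) + 2 * u * q"
    using assms by (simp add: field_simps power2_eq_square)
  finally show ?thesis unfolding q_def .
qed

lemma norm_integral_exp_quadratic_sub_exp_linear_le:
  fixes u :: complex
  assumes "Re u < 0"
  shows "norm (integral {0..1} (\<lambda>t. (1 - of_real t) *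
           (exp (u * (1 - of_real t ^ 2)) - exp (2 * u * (1 - of_real t))))) \<le> 6 * norm u / Re u ^ 4"
proof -
  have "norm (integral {0..1} (\<lambda>t. (1 - of_real t) *
           (exp (u * (1 - of_real t ^ 2)) - exp (2 * u * (1 - of_real t)))))
      \<le> integral {0..1} (\<lambda>t. norm u * ((1 - t) ^ 3 * exp (- (- Re u) * (1 - t))))"
    using norm_exp_quadratic_sub_exp_linear_le[OF assms]
    by (intro integral_norm_bound_integral integrable_continuous_interval continuous_intros) auto
  also have "\<dots> \<le> norm u * (6 / (- Re u) ^ 4)"
    using assms by (simp only: integral_mult_right) (intro mult_left_mono integral_cube_exp_le; simp)
  finally show ?thesis by (simp add: mult.commute)
qed

lemma exp_mult_rho2_asymptotic:
  fixes u :: complex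
  assumes "Re u < 0"
  shows "norm (2 * exp u * rho2 u + 1 - 1 / (2 * u)) \<le> 17 * norm u ^ 2 / Re u ^ 4"
proof -
  define a where "a = - Re u"
  define R where "R = integral {0..1}
    (\<lambda>t. (1 - of_real t) * (exp (u * (1 - of_real t ^ 2)) - exp (2 * u * (1 - of_real t))))"
  have a: "a > 0" using assms unfolding a_def by simp
  have u0: "u \<noteq> 0" using assms by auto
  have "a \<le> norm u" unfolding a_def using abs_Re_le_cmod[of u] by linarith
  then have a2: "1 / a ^ 2 \<le> norm u ^ 2 / a ^ 4"
    using a by (simp add: field_simps eval_nat_numeral mult_mono)
  have "exp (- a) \<le> 2 / a ^ 2"
    using exp_lower_Taylor_quadratic[of a] a by (simp add: exp_minus field_simps)
  then have exp_a: "norm (exp u) \<le> 2 * norm u ^ 2 / a ^ 4"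
    using a2 by (simp add: norm_exp_eq_Re a_def)
  have "a \<le> exp (2 * a)" using exp_ge_add_one_self[of "2 * a"] a by linarith
  then have "exp (- 2 * a) / (2 * a) \<le> 1 / (2 * a ^ 2)"
    using a by (simp add: exp_minus field_simps power2_eq_square)
  have "norm (exp (2 * u) * (2 * u - 1) / (2 * u)) \<le> exp (- 2 * a) * (2 * norm u + 1) / (2 * norm u)"
    using u0 unfolding a_def
    by (auto simp: norm_mult norm_divide norm_exp_eq_Re intro!: divide_right_mono mult_left_mono
        order.trans[OF norm_triangle_ineq4])
  also have "\<dots> = exp (- 2 * a) + exp (- 2 * a) / (2 * norm u)"
    using u0 by (simp add: field_simps)
  also have "\<dots> \<le> exp (- a) + exp (- 2 * a) / (2 * a)"
    using a u0 \<open>a \<le> norm u\<close> by (intro add_mono divide_left_mono) auto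
  finally have exp_2a: "norm (exp (2 * u) * (2 * u - 1) / (2 * u)) \<le> 5/2 * norm u ^ 2 / a ^ 4"
    using \<open>exp (- a) \<le> 2 / a ^ 2\<close> a2 \<open>exp (- 2 * a) / (2 * a) \<le> 1 / (2 * a ^ 2)\<close> by simp
  have "norm R \<le> 6 * norm u / a ^ 4"
    unfolding R_def a_def using norm_integral_exp_quadratic_sub_exp_linear_le[OF assms] by simp
  then have "2 * norm u * norm R \<le> 2 * norm u * (6 * norm u / a ^ 4)"
    by (intro mult_left_mono) auto
  then have "norm (2 * u * R) \<le> 12 * norm u ^ 2 / a ^ 4"
    by (simp add: norm_mult power2_eq_square)
  then have "norm (2 * exp u * rho2 u + 1 - 1 / (2 * u)) \<le> (2 + 5/2 + 12) * norm u ^ 2 / a ^ 4"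
    unfolding exp_mult_rho2_expansion[OF u0] R_def[symmetric] using exp_a exp_2a
    by (intro order.trans[OF norm_triangle_le[OF add_mono[OF norm_triangle_ineq order.refl]]])
       (auto simp: field_simps)
  also have "\<dots> \<le> 17 * norm u ^ 2 / a ^ 4"
    by (intro divide_right_mono mult_right_mono) auto
  finally show ?thesis unfolding a_def by simp
qed

lemma rho_ek_asymptotic:
  fixes \<xi> x :: real and k :: int
  assumes "\<xi> > 0" and "x > 0"
  defines "l \<equiv> of_real \<xi> - \<i> * of_int k"
  shows "norm (of_real x * rho_ek (- \<xi>) k (of_real x) + 1 / (of_real pi * l))
         \<le> 34 / pi * norm l ^ 2 / (\<xi> ^ 4 * x)"
proof -
  define u where "u = - l * of_real x"
  have u: "(of_real (- \<xi>) + \<i> * of_int k) * of_real x = u" "Re u = - (\<xi> * x)"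
    unfolding u_def l_def by (simp_all add: algebra_simps)
  have norm_u: "norm u = norm l * x"
    using assms(2) unfolding u_def by (simp add: norm_mult)
  have "l \<noteq> 0" using assms(1) unfolding l_def by (auto simp: complex_eq_iff)
  then have "of_real x * rho_ek (- \<xi>) k (of_real x) + 1 / (of_real pi * l) =
      2 / of_real pi * of_real x * (2 * exp u * rho2 u + 1 - 1 / (2 * u))"
    unfolding rho_ek_def u(1) using assms(2) by (simp add: u_def field_simps)
  then have "norm (of_real x * rho_ek (- \<xi>) k (of_real x) + 1 / (of_real pi * l)) =
      2 / pi * x * norm (2 * exp u * rho2 u + 1 - 1 / (2 * u))"
    using assms(2) by (simp add: norm_mult norm_divide)
  also have "\<dots> \<le> 2 / pi * x * (17 * norm u ^ 2 / Re u ^ 4)"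
    using exp_mult_rho2_asymptotic[of u] u(2) assms by (intro mult_left_mono) auto
  also have "\<dots> = 34 / pi * norm l ^ 2 / (\<xi> ^ 4 * x)"
    unfolding u(2) norm_u using assms(2) by (simp add: field_simps eval_nat_numeral)
  finally show ?thesis .
qed

section \<open>The series \<open>rho_tilde\<close>\<close>

lemma summable_on_norm_le:
  fixes f :: "'a \<Rightarrow> 'b::banach"
  assumes "w summable_on A" and "\<And>k. k \<in> A \<Longrightarrow> norm (f k) \<le> w k"
  shows "f summable_on A"
  by (rule abs_summable_summable, rule Infinite_Sum.abs_summable_on_comparison_test'[OF assms])

lemma norm_infsum_diff_le:
  fixes f h :: "'a \<Rightarrow> 'b::banach"
  assumes "w summable_on A" and "h summable_on A" and "\<And>k. k \<in> A \<Longrightarrow> norm (f k - h k) \<le> w k"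
  shows "norm (infsum f A - infsum h A) \<le> infsum w A"
proof -
  have d: "(\<lambda>k. f k - h k) summable_on A" by (rule summable_on_norm_le[OF assms(1,3)])
  have "infsum f A = infsum (\<lambda>k. h k + (f k - h k)) A" by simp
  also have "\<dots> = infsum h A + infsum (\<lambda>k. f k - h k) A" by (rule infsum_add[OF assms(2) d])
  finally have "infsum f A - infsum h A = infsum (\<lambda>k. f k - h k) A" by simp
  also have "norm \<dots> \<le> infsum w A"
    by (rule norm_infsum_le[OF has_sum_infsum[OF d] has_sum_infsum[OF assms(1)] assms(3)])
  finally show ?thesis .
qed

lemma summable_on_inverse_square_int:
  fixes c :: real
  assumes "c \<ge> 0"
  shows "(\<lambda>k::int. 1 / (c + of_int k ^ 2)) summable_on UNIV"
proof -
  have "summable (\<lambda>n::nat. 1 / (c + real n ^ 2))"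
  proof (rule summable_comparison_test'[OF inverse_power_summable[of 2]])
    fix n :: nat assume "n \<ge> 1"
    then show "norm (1 / (c + real n ^ 2)) \<le> inverse (real n ^ 2)"
      using assms by (auto simp: inverse_eq_divide intro!: divide_left_mono mult_pos_pos add_nonneg_pos)
  qed simp
  then have nat: "(\<lambda>n::nat. 1 / (c + real n ^ 2)) summable_on UNIV"
    using assms by (intro summable_nonneg_imp_summable_on) auto
  have "(\<lambda>k::int. 1 / (c + of_int k ^ 2)) summable_on (range int \<union> range (\<lambda>n. - int n))"
    using nat by (intro summable_on_union) (simp_all add: summable_on_reindex inj_on_def o_def)
  moreover have "range int \<union> range (\<lambda>n. - int n) = UNIV"
    by (auto intro: int_cases2)
  ultimately show ?thesis by simp
qed

lemma fourier_term_asymptotic: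
  fixes \<xi> x M :: real and c :: "int \<Rightarrow> complex" and k :: int
  assumes "\<xi> > 0" and "x > 0" and "\<And>k. norm (c k) \<le> M / norm (of_real \<xi> - \<i> * of_int k) ^ 4"
    and "M \<ge> 0"
  defines "l \<equiv> of_real \<xi> - \<i> * of_int k"
  shows "norm (of_real pi * of_real x * (c k * rho_ek (- \<xi>) k (of_real x)) + c k / l)
         \<le> 34 * M / (\<xi> ^ 4 * x) * (1 / norm l ^ 2)"
proof -
  have "l \<noteq> 0" using assms(1) unfolding l_def by (auto simp: complex_eq_iff)
  then have "of_real pi * of_real x * (c k * rho_ek (- \<xi>) k (of_real x)) + c k / l =
      of_real pi * c k * (of_real x * rho_ek (- \<xi>) k (of_real x) + 1 / (of_real pi * l))"
    by (simp add: field_simps)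
  then have "norm (of_real pi * of_real x * (c k * rho_ek (- \<xi>) k (of_real x)) + c k / l)
      = pi * norm (c k) * norm (of_real x * rho_ek (- \<xi>) k (of_real x) + 1 / (of_real pi * l))"
    by (simp add: norm_mult)
  also have "\<dots> \<le> pi * (M / norm l ^ 4) * (34 / pi * norm l ^ 2 / (\<xi> ^ 4 * x))"
    using rho_ek_asymptotic[OF assms(1,2), of k] assms(3)[of k] assms(4) unfolding l_def
    by (intro mult_mono) auto
  also have "\<dots> = 34 * M / (\<xi> ^ 4 * x) * (1 / norm l ^ 2)"
    using \<open>l \<noteq> 0\<close> by (simp add: field_simps eval_nat_numeral)
  finally show ?thesis .
qed

lemma rho_tilde_asymptotic:
  fixes \<xi> :: real and g :: "real \<Rightarrow> real"
  assumes "\<xi> > 0" and "real_analytic g"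
    and "\<And>x. g (x + 2 * pi) = exp (- 2 * pi * \<xi>) * g x"
  obtains C where "\<And>x. x > 0 \<Longrightarrow> norm (of_real (pi * x) * rho_tilde \<xi> g x +
      (\<Sum>\<^sub>\<infinity>k::int. fourier_coeff \<xi> g k / (of_real \<xi> - \<i> * of_int k))) \<le> C / x"
proof -
  define c where "c = fourier_coeff \<xi> g"
  define l where "l k = of_real \<xi> - \<i> * of_int k" for k :: int
  define w where "w k = 1 / norm (l k) ^ 2" for k
  obtain M where "M \<ge> 0" and M: "\<And>k. norm (c k) \<le> M / norm (l k) ^ 4"
    using fourier_coeff_decay[OF assms, of 4] unfolding c_def l_def by blast
  have "norm (l k) ^ 2 = \<xi>\<^sup>2 + of_int k ^ 2" for k unfolding l_def by (simp add: cmod_power2)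
  then have w_summable: "w summable_on UNIV"
    unfolding w_def using summable_on_inverse_square_int[of "\<xi>\<^sup>2"] by simp
  have l_ge: "norm (l k) \<ge> \<xi>" for k
    unfolding l_def using complex_Re_le_cmod[of "of_real \<xi> - \<i> * of_int k"] by simp
  then have l_pos: "norm (l k) > 0" for k using assms(1) less_le_trans by blast
  have "norm (- (c k / l k)) \<le> M / \<xi> ^ 3 * w k" for k
  proof -
    have "norm (- (c k / l k)) \<le> M / norm (l k) ^ 3 * w k"
      using M[of k] l_pos[of k] by (simp add: norm_divide w_def field_simps eval_nat_numeral)
    also have "\<dots> \<le> M / \<xi> ^ 3 * w k"
      using \<open>M \<ge> 0\<close> assms(1) l_ge[of k] l_pos[of k] unfolding w_def
      by (intro mult_right_mono divide_left_mono power_mono) auto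
    finally show ?thesis .
  qed
  then have h_summable: "(\<lambda>k. - (c k / l k)) summable_on UNIV"
    by (intro summable_on_norm_le[OF summable_on_cmult_right[OF w_summable]])
  define C where "C = 34 * M / \<xi> ^ 4 * infsum w UNIV"
  have "norm (of_real (pi * x) * rho_tilde \<xi> g x + infsum (\<lambda>k. c k / l k) UNIV) \<le> C / x"
    if "x > 0" for x
  proof -
    have "norm (of_real pi * of_real x * (c k * rho_ek (- \<xi>) k (of_real x)) - - (c k / l k))
        \<le> 34 * M / (\<xi> ^ 4 * x) * w k" for k
      using fourier_term_asymptotic[OF assms(1) that M[unfolded l_def] \<open>M \<ge> 0\<close>, of k]
      unfolding w_def l_def by simp
    then have "norm (infsum (\<lambda>k. of_real pi * of_real x * (c k * rho_ek (- \<xi>) k (of_real x))) UNIV -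
        infsum (\<lambda>k. - (c k / l k)) UNIV) \<le> infsum (\<lambda>k. 34 * M / (\<xi> ^ 4 * x) * w k) UNIV"
      by (intro norm_infsum_diff_le summable_on_cmult_right w_summable h_summable)
    then show ?thesis
      unfolding rho_tilde_def C_def c_def infsum_cmult_right' infsum_uminus
      by (simp add: mult.assoc)
  qed
  then show ?thesis using that unfolding c_def l_def by blast
qed

lemma complex_nonpos_if_near_nonneg_reals:
  fixes S :: complex
  assumes "\<And>x. x > 0 \<Longrightarrow> \<exists>r \<ge> 0. norm (of_real r + S) \<le> C / x"
  shows "S \<le> 0"
proof -
  have "t \<le> 0" if "\<And>x. x > 0 \<Longrightarrow> t \<le> C / x" for t
  proof (rule ccontr)
    assume "\<not> t \<le> 0"
    then have "t > 0" "C \<ge> t" using that[of 1] by auto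
    then have "t \<le> C / (2 * C / t)" using that[of "2 * C / t"] by simp
    then show False using \<open>t > 0\<close> \<open>C \<ge> t\<close> by (simp add: field_simps)
  qed
  moreover have "Re S \<le> C / x" and "\<bar>Im S\<bar> \<le> C / x" if x: "x > 0" for x
  proof -
    obtain r where "r \<ge> 0" and r: "norm (of_real r + S) \<le> C / x" using assms[OF x] by blast
    show "Re S \<le> C / x"
      using complex_Re_le_cmod[of "of_real r + S"] r \<open>r \<ge> 0\<close> by simp
    show "\<bar>Im S\<bar> \<le> C / x"
      using abs_Im_le_cmod[of "of_real r + S"] r by simp
  qed
  ultimately have "Re S \<le> 0" and "\<bar>Im S\<bar> \<le> 0" by blast+
  then show ?thesis by (simp add: less_eq_complex_def)
qed

theorem lemma5:
  fixes \<xi> :: real and g :: "real \<Rightarrow> real"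
  assumes "\<xi> > 0"
    and "real_analytic g"
    and "\<And>x. g (x + 2 * pi) = exp (- 2 * pi * \<xi>) * g x"
    and "\<And>x. x > 0 \<Longrightarrow> rho_tilde \<xi> g x > 0"
  shows "(\<Sum>\<^sub>\<infinity>k::int. fourier_coeff \<xi> g k / (of_real \<xi> - \<i> * of_int k)) \<le> 0"
proof -
  obtain C where C: "\<And>x. x > 0 \<Longrightarrow> norm (of_real (pi * x) * rho_tilde \<xi> g x +
      (\<Sum>\<^sub>\<infinity>k::int. fourier_coeff \<xi> g k / (of_real \<xi> - \<i> * of_int k))) \<le> C / x"
    using rho_tilde_asymptotic[OF assms(1-3)] by blast
  have "\<exists>r \<ge> 0. norm (of_real r + (\<Sum>\<^sub>\<infinity>k::int. fourier_coeff \<xi> g k / (of_real \<xi> - \<i> * of_int k))) \<le> C / x"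
    if "x > 0" for x
  proof -
    have "rho_tilde \<xi> g x = of_real (Re (rho_tilde \<xi> g x))" and "Re (rho_tilde \<xi> g x) > 0"
      using assms(4)[OF that] by (auto simp: less_complex_def complex_eq_iff)
    then have "of_real (pi * x) * rho_tilde \<xi> g x = of_real (pi * x * Re (rho_tilde \<xi> g x))"
      and "pi * x * Re (rho_tilde \<xi> g x) \<ge> 0"
      using that by (metis of_real_mult, simp)
    then show ?thesis using C[OF that] by metis
  qed
  then show ?thesis by (rule complex_nonpos_if_near_nonneg_reals)
qed

end
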